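(* Let $G=(V,E)$ be an undirected graph and $T\subseteq V$ a set of $k=|T|\geq 3$ terminals such that $G$ has a 2-node-connected subgraph containing $T$. Let $H^*=(V^*,E^* )$ be a 2-node-connected subgraph of $G$ containing $T$ with the minimum number of edges, and $\mathrm{OPT}=|E^*|$. Consider the algorithm described below, and assume that each call to the subroutines $\mathrm{CYC}$ and $\mathrm{PATH}$ returns a valid (minimum-size) subgraph whenever one exists. Let $H=(U,\hat F)$ be the output of the algorithm. Then $H$ is 2-node-connected, $T\subseteq U$, and $|\hat F|\leq |E^*|=\mathrm{OPT}$.
   Context: A graph is 2-node-connected if it has more than 2 nodes and deleting any single node leaves it connected. Subroutine $\mathrm{CYC}(G,X)$ returns the edge set of a simple cycle of $G$ containing all nodes of $X$ with the minimum number of edges, or reports an error if none exists. Subroutine $\mathrm{PATH}(G,X,s,t)$ returns the edge set of a simple $s$–$t$ path of $G$ containing all nodes of $X$ with the minimum number of edges, or reports an error if none exists. The algorithm: initialize $\hat F:=E$. For every $S\subseteq V$ with $|S|\leq 2k$, every $r\in\{1,\dots,k\}$, every ordered partition $(\tilde T_1,\dots,\tilde T_r)$ of $T\cup S$ into nonempty sets with $|\tilde T_1|\geq 2$, and every choice of node pairs $(s_i,t_i)$, $i=1,\dots,r-1$, with $s_i\neq t_i$ and $s_i,t_i\in\tilde T_1\cup\dots\cup\tilde T_i$: let $H$ be the union of $\mathrm{CYC}(G,\tilde T_1)$ and $\mathrm{PATH}(G,\tilde T_{i+1},s_i,t_i)$ for $i=1,\dots,r-1$; if any call reports an error, skip this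 choice; otherwise, if $|E(H)|<|\hat F|$, set $\hat F:=E(H)$. Output the subgraph with edge set $\hat F$ (and node set $U$ the nodes incident to it). *)

theory Defs
  imports Main
begin

definition graph :: "'a set \<Rightarrow> 'a set set \<Rightarrow> bool" where
  "graph V Eg \<longleftrightarrow> finite V \<and> (\<forall>e\<in>Eg. e \<subseteq> V \<and> card e = 2)"

definition subgraph :: "'a set \<Rightarrow> 'a set set \<Rightarrow> 'a set \<Rightarrow> 'a set set \<Rightarrow> bool" where
  "subgraph U F V Eg \<longleftrightarrow> U \<subseteq> V \<and> F \<subseteq> Eg \<and> (\<forall>e\<in>F. e \<subseteq> U)"

definition adj :: "'a set set \<Rightarrow> ('a \<times> 'a) set" where
  "adj F = {(u, v). {u, v} \<in> F}"

definition connected_graph :: "'a set \<Rightarrow> 'a set set \<Rightarrow> bool" where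
  "connected_graph U F \<longleftrightarrow>
     (\<forall>u\<in>U. \<forall>v\<in>U. (u, v) \<in> (adj {e\<in>F. e \<subseteq> U})\<^sup>*)"

definition two_node_connected :: "'a set \<Rightarrow> 'a set set \<Rightarrow> bool" where
  "two_node_connected U F \<longleftrightarrow> finite U \<and> card U > 2 \<and>
     (\<forall>x\<in>U. connected_graph (U - {x}) {e\<in>F. x \<notin> e})"

definition is_cycle :: "'a set set \<Rightarrow> 'a list \<Rightarrow> bool" where
  "is_cycle Eg vs \<longleftrightarrow> distinct vs \<and> length vs \<ge> 3 \<and>
     (\<forall>i<length vs. {vs ! i, vs ! ((i + 1) mod length vs)} \<in> Eg)"

definition cycle_edges :: "'a list \<Rightarrow> 'a set set" where
  "cycle_edges vs = {{vs ! i, vs ! ((i + 1) mod length vs)} | i. i < length vs}"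

definition is_path :: "'a set set \<Rightarrow> 'a list \<Rightarrow> 'a \<Rightarrow> 'a \<Rightarrow> bool" where
  "is_path Eg vs s t \<longleftrightarrow> distinct vs \<and> vs \<noteq> [] \<and> hd vs = s \<and> last vs = t \<and>
     (\<forall>i. i + 1 < length vs \<longrightarrow> {vs ! i, vs ! (i + 1)} \<in> Eg)"

definition path_edges :: "'a list \<Rightarrow> 'a set set" where
  "path_edges vs = {{vs ! i, vs ! (i + 1)} | i. i + 1 < length vs}"

text \<open>Specification of the subroutines CYC(G,-) and PATH(G,-,-,-) for a fixed graph:
  None = error; Some F = edge set of a minimum-size simple cycle / s-t path through X.\<close>
definition cyc_spec :: "'a set set \<Rightarrow> ('a set \<Rightarrow> 'a set set option) \<Rightarrow> bool" where
  "cyc_spec Eg CYC \<longleftrightarrow> (\<forall>X.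
     (CYC X = None \<longleftrightarrow> \<not> (\<exists>vs. is_cycle Eg vs \<and> X \<subseteq> set vs)) \<and>
     (\<forall>C. CYC X = Some C \<longrightarrow>
        (\<exists>vs. is_cycle Eg vs \<and> X \<subseteq> set vs \<and> C = cycle_edges vs \<and>
           (\<forall>ws. is_cycle Eg ws \<and> X \<subseteq> set ws \<longrightarrow> card C \<le> card (cycle_edges ws)))))"

definition path_spec :: "'a set set \<Rightarrow> ('a set \<Rightarrow> 'a \<Rightarrow> 'a \<Rightarrow> 'a set set option) \<Rightarrow> bool" where
  "path_spec Eg PATH \<longleftrightarrow> (\<forall>X s t.
     (PATH X s t = None \<longleftrightarrow> \<not> (\<exists>vs. is_path Eg vs s t \<and> X \<subseteq> set vs)) \<and>
     (\<forall>P. PATH X s t = Some P \<longrightarrow>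
        (\<exists>vs. is_path Eg vs s t \<and> X \<subseteq> set vs \<and> P = path_edges vs \<and>
           (\<forall>ws. is_path Eg ws s t \<and> X \<subseteq> set ws \<longrightarrow> card P \<le> card (path_edges ws)))))"

text \<open>A choice of the algorithm: (S, [T_1,...,T_r], [(s_1,t_1),...,(s_{r-1},t_{r-1})]).\<close>
definition choices :: "'a set \<Rightarrow> 'a set \<Rightarrow> ('a set \<times> 'a set list \<times> ('a \<times> 'a) list) set" where
  "choices V T = {(S, Ts, ps). S \<subseteq> V \<and> card S \<le> 2 * card T \<and>
      1 \<le> length Ts \<and> length Ts \<le> card T \<and>
      (\<forall>i<length Ts. Ts ! i \<noteq> {}) \<and>
      (\<forall>i<length Ts. \<forall>j<length Ts. i \<noteq> j \<longrightarrow> Ts ! i \<inter> Ts ! j = {}) \<and>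
      \<Union>(set Ts) = T \<union> S \<and> card (Ts ! 0) \<ge> 2 \<and>
      length ps = length Ts - 1 \<and>
      (\<forall>i<length ps. fst (ps ! i) \<noteq> snd (ps ! i) \<and>
          fst (ps ! i) \<in> \<Union>(set (take (i + 1) Ts)) \<and>
          snd (ps ! i) \<in> \<Union>(set (take (i + 1) Ts)))}"

definition candidate ::
  "('a set \<Rightarrow> 'a set set option) \<Rightarrow> ('a set \<Rightarrow> 'a \<Rightarrow> 'a \<Rightarrow> 'a set set option) \<Rightarrow>
   'a set \<times> 'a set list \<times> ('a \<times> 'a) list \<Rightarrow> 'a set set option" where
  "candidate CYC PATH ch = (case ch of (S, Ts, ps) \<Rightarrow>
     (case CYC (Ts ! 0) of
        None \<Rightarrow> None
      | Some C \<Rightarrow>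
          (if (\<forall>i<length ps. PATH (Ts ! (i + 1)) (fst (ps ! i)) (snd (ps ! i)) \<noteq> None)
           then Some (C \<union> \<Union>{the (PATH (Ts ! (i + 1)) (fst (ps ! i)) (snd (ps ! i))) | i. i < length ps})
           else None)))"

definition alg_step ::
  "('a set \<Rightarrow> 'a set set option) \<Rightarrow> ('a set \<Rightarrow> 'a \<Rightarrow> 'a \<Rightarrow> 'a set set option) \<Rightarrow>
   'a set \<times> 'a set list \<times> ('a \<times> 'a) list \<Rightarrow> 'a set set \<Rightarrow> 'a set set" where
  "alg_step CYC PATH ch F = (case candidate CYC PATH ch of
      None \<Rightarrow> F
    | Some H \<Rightarrow> (if card H < card F then H else F))"

text \<open>Output edge set of the algorithm when the choices are enumerated in the order given by the list.\<close>
definition alg_output ::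
  "'a set set \<Rightarrow> ('a set \<Rightarrow> 'a set set option) \<Rightarrow> ('a set \<Rightarrow> 'a \<Rightarrow> 'a \<Rightarrow> 'a set set option) \<Rightarrow>
   ('a set \<times> 'a set list \<times> ('a \<times> 'a) list) list \<Rightarrow> 'a set set" where
  "alg_output Eg CYC PATH order = fold (alg_step CYC PATH) order Eg"

end

(*
  An optimal solution H* = (Vs, Es) contains a cycle through a terminal.  As long as some
  terminal t is not covered by the part W of H* built so far, H* contains an ear of W through t:
  2-node-connectivity gives an ear leaving W, and if it misses t, an ear of the enlarged set
  through t (by induction) can be spliced with it.  So H* has an ear decomposition
  C, P_1, ..., P_m in which every piece covers a new terminal, hence m < k.  Every edge of an
  ear has an inner vertex as an end, so the pieces are edge-disjoint and
  |C| + |P_1| + ... + |P_m| <= |Es|.  The ends of the ears (S), the terminals and ends first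
  covered by each piece (the partition) and the ends of each P_i (the pairs) form a choice of
  the algorithm for which CYC and PATH return pieces no larger than C and the P_i.
  Conversely every candidate is 2-node-connected and contains T, because a cycle is
  2-node-connected and so is every graph obtained from a 2-node-connected one by adding a path
  between two of its vertices; and the algorithm outputs a smallest candidate.
*)

theory Submission
  imports Defs
begin

section \<open>Walks\<close>

definition walk :: "'a set set \<Rightarrow> 'a list \<Rightarrow> bool" where
  "walk F = successively (\<lambda>u v. {u, v} \<in> F)"

lemma walk_simps [simp]:
  "walk F []" "walk F [x]" "walk F (x # y # xs) \<longleftrightarrow> {x, y} \<in> F \<and> walk F (y # xs)"
  by (simp_all add: walk_def)

lemma walk_append_iff:
  "walk F (xs @ ys) \<longleftrightarrow> walk F xs \<and> walk F ys \<and> (xs = [] \<or> ys = [] \<or> {last xs, hd ys} \<in> F)"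
  by (simp add: walk_def successively_append_iff)

lemma walk_infix: "walk F (xs @ ys @ zs) \<Longrightarrow> walk F ys"
  by (simp add: walk_append_iff)

lemma walk_set_subset: "walk F xs \<Longrightarrow> set xs \<subseteq> insert (hd xs) (\<Union>F)"
  by (induction xs rule: induct_list012) auto

lemma walk_rev [simp]: "walk F (rev xs) \<longleftrightarrow> walk F xs"
  by (simp add: walk_def insert_commute)

lemma walk_mono: "walk F xs \<Longrightarrow> F \<subseteq> F' \<Longrightarrow> walk F' xs"
  unfolding walk_def by (erule successively_mono) blast

lemma walk_avoiding: "walk F xs \<Longrightarrow> x \<notin> set xs \<Longrightarrow> walk {e \<in> F. x \<notin> e} xs"
  unfolding walk_def by (erule successively_mono) blast

lemma walk_iff_path_edges_subset: "walk F xs \<longleftrightarrow> path_edges xs \<subseteq> F"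
  by (auto simp: walk_def successively_conv_nth path_edges_def)

lemma finite_path_edges: "finite (path_edges xs)"
  unfolding path_edges_def by (rule finite_subset[of _ "(\<lambda>i. {xs ! i, xs ! (i + 1)}) ` {..<length xs}"]) auto

lemma Union_path_edges: "2 \<le> length xs \<Longrightarrow> \<Union>(path_edges xs) = set xs"
proof
  show "\<Union>(path_edges xs) \<subseteq> set xs" by (auto simp: path_edges_def)
next
  assume len: "2 \<le> length xs"
  show "set xs \<subseteq> \<Union>(path_edges xs)"
  proof
    fix v assume "v \<in> set xs"
    then obtain j where j: "j < length xs" "xs ! j = v" by (meson in_set_conv_nth)
    show "v \<in> \<Union>(path_edges xs)"
    proof (cases "j + 1 < length xs")
      case True
      then show ?thesis using j unfolding path_edges_def by blast
    next
      case False
      then have "{xs ! (j - 1), xs ! (j - 1 + 1)} \<in> path_edges xs"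
        using j len unfolding path_edges_def by (intro CollectI exI[of _ "j - 1"]) auto
      moreover have "j - 1 + 1 = j" using False j len by linarith
      ultimately show ?thesis using j by (metis UnionI insertCI)
    qed
  qed
qed

lemma walk_set_subset_Union: "walk F xs \<Longrightarrow> 2 \<le> length xs \<Longrightarrow> set xs \<subseteq> \<Union>F"
  by (metis Sup_subset_mono Union_path_edges walk_iff_path_edges_subset)

lemma cycle_edges_conv_path_edges:
  assumes "c \<noteq> []"
  shows "cycle_edges c = path_edges (c @ [hd c])"
proof -
  have "(c @ [hd c]) ! i = c ! i \<and> (c @ [hd c]) ! (i + 1) = c ! ((i + 1) mod length c)"
    if i: "i < length c" for i
  proof (cases "i + 1 < length c")
    case False
    then have "i + 1 = length c" using i by simp
    then show ?thesis using assms by (simp add: nth_append hd_conv_nth)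
  qed (simp add: nth_append i)
  then have "cycle_edges c = (\<lambda>i. {(c @ [hd c]) ! i, (c @ [hd c]) ! (i + 1)}) ` {..<length c}"
    unfolding cycle_edges_def by force
  also have "\<dots> = path_edges (c @ [hd c])"
    unfolding path_edges_def by force
  finally show ?thesis .
qed

lemma finite_cycle_edges: "finite (cycle_edges c)"
  by (cases "c = []") (simp_all add: cycle_edges_def cycle_edges_conv_path_edges finite_path_edges)

lemma Union_cycle_edges:
  assumes "c \<noteq> []"
  shows "\<Union>(cycle_edges c) = set c"
proof -
  have "2 \<le> length (c @ [hd c])" using assms by (cases c) auto
  then show ?thesis using assms by (simp add: cycle_edges_conv_path_edges Union_path_edges insert_absorb)
qed

lemma is_cycle_iff_walk: "is_cycle F c \<longleftrightarrow> distinct c \<and> 3 \<le> length c \<and> walk F (c @ [hd c])"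
proof -
  have "is_cycle F c \<longleftrightarrow> distinct c \<and> 3 \<le> length c \<and> cycle_edges c \<subseteq> F"
    unfolding is_cycle_def cycle_edges_def by blast
  moreover have "3 \<le> length c \<Longrightarrow> cycle_edges c = path_edges (c @ [hd c])"
    by (intro cycle_edges_conv_path_edges) auto
  ultimately show ?thesis by (auto simp: walk_iff_path_edges_subset)
qed

lemma is_path_iff_walk:
  "is_path F p s t \<longleftrightarrow> distinct p \<and> p \<noteq> [] \<and> hd p = s \<and> last p = t \<and> walk F p"
  unfolding is_path_def walk_iff_path_edges_subset path_edges_def by blast

section \<open>Reachability and 2-node-connectivity\<close>

lemma adj_mono: "F \<subseteq> F' \<Longrightarrow> adj F \<subseteq> adj F'"
  by (auto simp: adj_def)

lemma converse_adj [simp]: "(adj F)\<inverse> = adj F"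
  by (auto simp: adj_def insert_commute)

lemma rtrancl_adj_sym: "(u, v) \<in> (adj F)\<^sup>* \<Longrightarrow> (v, u) \<in> (adj F)\<^sup>*"
  by (metis converse_adj rtrancl_converseI)

lemma walk_imp_rtrancl_adj:
  assumes "walk F p" "u \<in> set p" "v \<in> set p"
  shows "(u, v) \<in> (adj F)\<^sup>*"
proof -
  have from_hd: "(hd p, w) \<in> (adj F)\<^sup>*" if "w \<in> set p" for w
    using assms(1) that
  proof (induction p rule: induct_list012)
    case (3 x y zs)
    then have "(x, y) \<in> adj F" by (simp add: adj_def)
    with 3 show ?case by (auto intro: converse_rtrancl_into_rtrancl)
  qed auto
  show ?thesis using from_hd[OF assms(2)] from_hd[OF assms(3)]
    by (meson rtrancl_adj_sym rtrancl_trans)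
qed

lemma rtrancl_adj_imp_path:
  assumes "(u, v) \<in> (adj F)\<^sup>*"
  shows "\<exists>p. walk F p \<and> distinct p \<and> p \<noteq> [] \<and> hd p = u \<and> last p = v"
  using assms
proof (induction rule: rtrancl_induct)
  case base
  show ?case by (intro exI[of _ "[u]"]) simp
next
  case (step y z)
  then obtain p where p: "walk F p" "distinct p" "p \<noteq> []" "hd p = u" "last p = y" by blast
  have yz: "{y, z} \<in> F" using step(2) by (simp add: adj_def)
  show ?case
  proof (cases "z \<in> set p")
    case True
    then obtain p1 p2 where p12: "p = p1 @ z # p2" by (meson split_list)
    then have "walk F (p1 @ [z])" using p(1) walk_append_iff[of F "p1 @ [z]" p2] by simp
    then show ?thesis using p p12 by (intro exI[of _ "p1 @ [z]"]) (cases p1; auto)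
  next
    case False
    then show ?thesis using p yz by (intro exI[of _ "p @ [z]"]) (simp add: walk_append_iff)
  qed
qed

lemma rtrancl_adj_crossing:
  assumes "(a, y) \<in> (adj F)\<^sup>*" "a \<in> W" "y \<notin> W"
  shows "\<exists>w v. w \<in> W \<and> v \<notin> W \<and> {w, v} \<in> F"
  using assms by (induction rule: rtrancl_induct) (auto simp: adj_def)

lemma obtain_third_elem:
  assumes "finite U" "2 < card U"
  obtains z where "z \<in> U" "z \<noteq> u" "z \<noteq> v"
proof -
  have "card {u, v} \<le> 2" by (cases "u = v") simp_all
  then have "\<not> U \<subseteq> {u, v}" using assms card_mono[of "{u, v}" U] by fastforce
  then show thesis using that by blast
qed

lemma two_node_connected_iff:
  assumes "\<Union>F \<subseteq> U"
  shows "two_node_connected U F \<longleftrightarrow> finite U \<and> 2 < card U \<and>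
    (\<forall>x\<in>U. \<forall>u\<in>U - {x}. \<forall>v\<in>U - {x}. (u, v) \<in> (adj {e \<in> F. x \<notin> e})\<^sup>*)"
proof -
  have "{e \<in> {e \<in> F. x \<notin> e}. e \<subseteq> U - {x}} = {e \<in> F. x \<notin> e}" for x
    using assms by blast
  then show ?thesis unfolding two_node_connected_def connected_graph_def by simp
qed

lemma two_node_connected_rtrancl_adj:
  assumes "two_node_connected U F" "\<Union>F \<subseteq> U" "u \<in> U" "v \<in> U"
  shows "(u, v) \<in> (adj F)\<^sup>*"
proof -
  have U: "finite U" "2 < card U" using assms(1) by (auto simp: two_node_connected_def)
  obtain z where "z \<in> U" "z \<noteq> u" "z \<noteq> v" using obtain_third_elem[OF U] .
  then have "(u, v) \<in> (adj {e \<in> F. z \<notin> e})\<^sup>*"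
    using assms two_node_connected_iff by blast
  moreover have "adj {e \<in> F. z \<notin> e} \<subseteq> adj F" by (rule adj_mono) blast
  ultimately show ?thesis using rtrancl_mono by blast
qed

lemma two_node_connected_rtrancl_adj_avoiding:
  assumes tnc: "two_node_connected (\<Union>F) F" and "a \<in> \<Union>F - {x}" "b \<in> \<Union>F - {x}"
  shows "(a, b) \<in> (adj {e \<in> F. x \<notin> e})\<^sup>*"
proof (cases "x \<in> \<Union>F")
  case True
  then show ?thesis using tnc assms(2,3) two_node_connected_iff[of F "\<Union>F"] by blast
next
  case False
  then have "{e \<in> F. x \<notin> e} = F" by blast
  then show ?thesis using two_node_connected_rtrancl_adj[OF tnc] assms(2,3) by simp
qed

lemma two_node_connected_cycle:
  assumes "distinct c" "3 \<le> length c"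
  shows "two_node_connected (set c) (cycle_edges c)"
proof -
  let ?C = "cycle_edges c"
  have c: "c \<noteq> []" using assms(2) by auto
  have around: "walk ?C (c @ [hd c])"
    using c by (simp add: cycle_edges_conv_path_edges walk_iff_path_edges_subset)
  have "(u, v) \<in> (adj {e \<in> ?C. x \<notin> e})\<^sup>*"
    if x: "x \<in> set c" and uv: "u \<in> set c - {x}" "v \<in> set c - {x}" for x u v
  proof -
    obtain xs ys where c_split: "c = xs @ x # ys" using x by (meson split_list)
    have "walk ?C (ys @ xs)"
    proof (cases xs)
      case Nil
      then show ?thesis using around walk_infix[of ?C "[x]" ys "[x]"] c_split by simp
    next
      case (Cons a as)
      then have "walk ?C xs" "walk ?C (ys @ [hd xs])"
        using around walk_infix[of ?C "[]" xs] walk_infix[of ?C "xs @ [x]" "ys @ [hd xs]" "[]"]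
        by (simp_all add: c_split)
      then show ?thesis by (auto simp: walk_append_iff)
    qed
    moreover have "set (ys @ xs) = set c - {x}" "x \<notin> set (ys @ xs)"
      using assms(1) c_split by auto
    ultimately show ?thesis using uv walk_avoiding walk_imp_rtrancl_adj by metis
  qed
  moreover have "2 < card (set c)" using assms by (simp add: distinct_card)
  ultimately show ?thesis using c by (simp add: two_node_connected_iff Union_cycle_edges)
qed

lemma path_vertex_reaches_end_avoiding:
  assumes "distinct p" "w \<in> set p" "w \<noteq> x"
  shows "\<exists>a\<in>{hd p, last p} - {x}. (w, a) \<in> (adj {e \<in> path_edges p. x \<notin> e})\<^sup>*"
proof -
  let ?R = "adj {e \<in> path_edges p. x \<notin> e}"
  obtain p1 p2 where p12: "p = p1 @ w # p2" using assms(2) by (meson split_list)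
  have walk_p: "walk (path_edges p) p" by (simp add: walk_iff_path_edges_subset)
  show ?thesis
  proof (cases "x \<in> set p1")
    case False
    have "walk (path_edges p) (p1 @ [w])"
      using walk_p walk_infix[of _ "[]" "p1 @ [w]" p2] p12 by simp
    moreover have "x \<notin> set (p1 @ [w])" using False assms(3) by simp
    ultimately have "walk {e \<in> path_edges p. x \<notin> e} (p1 @ [w])" by (rule walk_avoiding)
    then have "(w, hd (p1 @ [w])) \<in> ?R\<^sup>*"
      by (rule walk_imp_rtrancl_adj) (cases p1; simp)+
    moreover have "hd (p1 @ [w]) \<in> {hd p, last p} - {x}" using p12 False assms(3) by (cases p1) auto
    ultimately show ?thesis by blast
  next
    case True
    then have x_notin: "x \<notin> set (w # p2)" using assms(1) p12 by auto
    have "walk (path_edges p) (w # p2)" using walk_p walk_infix[of _ p1 "w # p2" "[]"] p12 by simp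
    then have "walk {e \<in> path_edges p. x \<notin> e} (w # p2)" using x_notin by (rule walk_avoiding)
    then have "(w, last (w # p2)) \<in> ?R\<^sup>*" by (rule walk_imp_rtrancl_adj) simp_all
    moreover have "last (w # p2) \<in> set (w # p2)" "last (w # p2) = last p" using p12 by simp_all
    then have "last (w # p2) \<in> {hd p, last p} - {x}" using x_notin by auto
    ultimately show ?thesis by blast
  qed
qed

lemma two_node_connected_add_path:
  assumes tnc: "two_node_connected (\<Union>F) F"
    and p: "distinct p" "p \<noteq> []" "hd p \<noteq> last p" "hd p \<in> \<Union>F" "last p \<in> \<Union>F"
  shows "two_node_connected (\<Union>(F \<union> path_edges p)) (F \<union> path_edges p)"
proof -
  let ?F' = "F \<union> path_edges p"
  have "2 \<le> length p" using p(2,3) by (cases p; cases "tl p") auto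
  then have U': "\<Union>?F' = \<Union>F \<union> set p" by (simp add: Union_path_edges)
  have F: "finite (\<Union>F)" "2 < card (\<Union>F)" using tnc by (auto simp: two_node_connected_def)
  (* Without x the old vertices stay connected, and every new vertex reaches an old one along p. *)
  have "(u, v) \<in> (adj {e \<in> ?F'. x \<notin> e})\<^sup>*"
    if x: "x \<in> \<Union>?F'" and uv: "u \<in> \<Union>?F' - {x}" "v \<in> \<Union>?F' - {x}" for x u v
  proof -
    let ?R = "adj {e \<in> ?F'. x \<notin> e}"
    have old: "(a, b) \<in> ?R\<^sup>*" if "a \<in> \<Union>F - {x}" "b \<in> \<Union>F - {x}" for a b
    proof -
      have "adj {e \<in> F. x \<notin> e} \<subseteq> ?R" by (rule adj_mono) blast
      then show ?thesis using two_node_connected_rtrancl_adj_avoiding[OF tnc that] rtrancl_mono by blast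
    qed
    have anchor: "\<exists>a\<in>\<Union>F - {x}. (w, a) \<in> ?R\<^sup>*" if w: "w \<in> \<Union>?F' - {x}" for w
    proof (cases "w \<in> \<Union>F")
      case False
      then have "w \<in> set p" "w \<noteq> x" using w U' by auto
      then obtain a where a: "a \<in> {hd p, last p} - {x}" "(w, a) \<in> (adj {e \<in> path_edges p. x \<notin> e})\<^sup>*"
        using path_vertex_reaches_end_avoiding[OF p(1)] by blast
      moreover have "adj {e \<in> path_edges p. x \<notin> e} \<subseteq> ?R" by (rule adj_mono) blast
      ultimately have "(w, a) \<in> ?R\<^sup>*" using rtrancl_mono by blast
      moreover have "a \<in> \<Union>F - {x}" using a(1) p(4,5) by blast
      ultimately show ?thesis by blast
    qed (use w in blast)
    obtain a b where ab: "a \<in> \<Union>F - {x}" "(u, a) \<in> ?R\<^sup>*" "b \<in> \<Union>F - {x}" "(v, b) \<in> ?R\<^sup>*"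
      using anchor[OF uv(1)] anchor[OF uv(2)] by blast
    have "(a, b) \<in> ?R\<^sup>*" using old ab(1,3) .
    also have "(b, v) \<in> ?R\<^sup>*" using ab(4) by (rule rtrancl_adj_sym)
    finally show ?thesis using ab(2) by (rule rtrancl_trans[rotated])
  qed
  moreover have "finite (\<Union>?F')" using F U' by simp
  moreover have "card (\<Union>F) \<le> card (\<Union>?F')" using F U' by (simp add: card_mono)
  ultimately show ?thesis using F by (simp add: two_node_connected_iff)
qed

section \<open>Ears\<close>

definition ear :: "'a set set \<Rightarrow> 'a set \<Rightarrow> 'a list \<Rightarrow> bool" where
  "ear F W p \<longleftrightarrow> walk F p \<and> distinct p \<and> 2 \<le> length p \<and> set p \<inter> W = {hd p, last p}"

lemma ear_rev: "ear F W p \<Longrightarrow> ear F W (rev p)"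
  unfolding ear_def by (auto simp: hd_rev last_rev)

lemma ear_hd_neq_last: "ear F W p \<Longrightarrow> hd p \<noteq> last p"
  unfolding ear_def by (cases p) auto

lemma earI:
  assumes "walk F p" "distinct p" "hd p \<noteq> last p" "set p \<inter> W = {hd p, last p}"
  shows "ear F W p"
proof -
  have "p \<noteq> []" using assms(4) by auto
  then have "2 \<le> length p" using assms(3) by (cases p; cases "tl p") auto
  then show ?thesis using assms unfolding ear_def by blast
qed

lemma ear_edge_not_inside:
  assumes p: "ear F W p" "\<not> set p \<subseteq> W" and e: "e \<in> path_edges p"
  shows "\<not> e \<subseteq> W"
proof
  assume "e \<subseteq> W"
  let ?n = "length p"
  obtain k where k: "k + 1 < ?n" "e = {p ! k, p ! (k + 1)}"
    using e unfolding path_edges_def by blast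
  have dist: "distinct p" and ends: "set p \<inter> W = {hd p, last p}" and "p \<noteq> []"
    using p(1) unfolding ear_def by auto
  then have hd_last: "hd p = p ! 0" "last p = p ! (?n - 1)" by (simp_all add: hd_conv_nth last_conv_nth)
  have end_index: "i = 0 \<or> i = ?n - 1" if i: "i < ?n" "p ! i \<in> W" for i
  proof -
    have "p ! i \<in> set p \<inter> W" using i by simp
    then have "p ! i = p ! 0 \<or> p ! i = p ! (?n - 1)" unfolding ends hd_last by blast
    moreover have "0 < ?n" "?n - 1 < ?n" using i(1) by auto
    ultimately show ?thesis using i(1) dist nth_eq_iff_index_eq by metis
  qed
  have "k = 0 \<or> k = ?n - 1" "k + 1 = 0 \<or> k + 1 = ?n - 1"
    using end_index[of k] end_index[of "k + 1"] k \<open>e \<subseteq> W\<close> by auto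
  then have "?n = 2" "k = 0" using k(1) by auto
  have "set p \<subseteq> e"
  proof
    fix v assume "v \<in> set p"
    then obtain i where "i < ?n" "p ! i = v" by (meson in_set_conv_nth)
    then show "v \<in> e" using \<open>?n = 2\<close> \<open>k = 0\<close> k(2) by (auto simp: less_2_cases_iff)
  qed
  then show False using p(2) \<open>e \<subseteq> W\<close> by blast
qed

lemma ear_split:
  assumes P: "ear F W P" and P_split: "P = P1 @ v # P2" and v: "v \<notin> W"
  shows "walk F (P1 @ [v])" "walk F (v # P2)" "P1 \<noteq> []" "P2 \<noteq> []" "hd P = hd P1" "last P = last P2"
    "set P1 \<inter> W = {hd P}" "set P2 \<inter> W = {last P}" "set P1 \<inter> set P2 = {}" "v \<notin> set P1" "v \<notin> set P2"
    "distinct P1" "distinct P2"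
proof -
  have walk: "walk F P" and dist: "distinct P" and ends: "set P \<inter> W = {hd P, last P}"
    using P unfolding ear_def by auto
  show "walk F (P1 @ [v])" "walk F (v # P2)"
    using walk walk_infix[of F "[]" "P1 @ [v]" P2] walk_infix[of F P1 "v # P2" "[]"]
    unfolding P_split by simp_all
  show disj: "set P1 \<inter> set P2 = {}" "v \<notin> set P1" "v \<notin> set P2" "distinct P1" "distinct P2"
    using dist unfolding P_split by auto
  have "hd P \<in> W" "last P \<in> W" using ends by auto
  then show "P1 \<noteq> []" "P2 \<noteq> []" using v unfolding P_split by auto
  then show hd_last: "hd P = hd P1" "last P = last P2" unfolding P_split by simp_all
  have "set P1 \<subseteq> set P" "set P2 \<subseteq> set P" unfolding P_split by auto
  then have "set P1 \<inter> W \<subseteq> {hd P, last P}" "set P2 \<inter> W \<subseteq> {hd P, last P}" using ends by blast+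
  moreover have "hd P \<in> set P1" "last P \<in> set P2" using hd_last \<open>P1 \<noteq> []\<close> \<open>P2 \<noteq> []\<close> by simp_all
  ultimately show "set P1 \<inter> W = {hd P}" "set P2 \<inter> W = {last P}"
    using disj(1) \<open>hd P \<in> W\<close> \<open>last P \<in> W\<close> by blast+
qed

lemma ear_splice_end:
  assumes P: "ear F W P" and Q: "ear F (W \<union> set P) Q"
    and Q_ends: "hd Q \<in> W" "last Q \<notin> W" "hd Q \<noteq> last P"
    and P_split: "P = P1 @ last Q # P2"
  shows "ear F W (Q @ P2)"
proof -
  note P12 = ear_split[OF P P_split Q_ends(2)]
  have Q_props: "walk F Q" "distinct Q" "Q \<noteq> []" "set Q \<inter> (W \<union> set P) = {hd Q, last Q}"
    using Q unfolding ear_def by auto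
  have Q_W: "set Q \<inter> W = {hd Q}" using Q_props(3,4) Q_ends(1,2) by auto
  have "set P2 \<subseteq> set P" using P_split by auto
  then have "set Q \<inter> set P2 \<subseteq> {hd Q, last Q}" using Q_props(4) by blast
  moreover have "hd Q \<notin> set P2" using P12(6,8) Q_ends(1,3) by blast
  ultimately have "set Q \<inter> set P2 = {}" using P12(11) by blast
  moreover have "walk F (Q @ P2)"
    using Q_props(1,3) P12(2,4) walk_append_iff[of F "[last Q]" P2] by (simp add: walk_append_iff)
  moreover have "set (Q @ P2) \<inter> W = {hd Q, last P2}" using Q_W P12(6,8) by auto
  ultimately show ?thesis
    using Q_props(2,3) P12(4,6,13) Q_ends(3) by (intro earI) simp_all
qed

lemma ear_splice_inner:
  assumes P: "ear F W P" and Q: "ear F (W \<union> set P) Q"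
    and Q_ends: "hd Q \<notin> W" "last Q \<notin> W"
    and P_split: "P = P1 @ hd Q # P2 @ last Q # P3"
  shows "ear F W (P1 @ Q @ P3)"
proof -
  note P1 = ear_split[OF P P_split Q_ends(1)]
  have "P = (P1 @ hd Q # P2) @ last Q # P3" using P_split by simp
  note P3 = ear_split[OF P this Q_ends(2)]
  have Q_props: "walk F Q" "distinct Q" "Q \<noteq> []" "set Q \<inter> (W \<union> set P) = {hd Q, last Q}"
    using Q unfolding ear_def by auto
  have "set Q \<inter> W \<subseteq> {hd Q, last Q}" using Q_props(4) by blast
  then have Q_W: "set Q \<inter> W = {}" using Q_ends by blast
  have "set P1 \<subseteq> set P" "set P3 \<subseteq> set P" using P_split by auto
  then have "set Q \<inter> set P1 \<subseteq> {hd Q, last Q}" "set Q \<inter> set P3 \<subseteq> {hd Q, last Q}" using Q_props(4) by blast+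
  then have "set Q \<inter> set P1 = {}" "set Q \<inter> set P3 = {}" using P1(9,10) P3(9,11) by auto
  moreover have "set P1 \<inter> set P3 = {}" using P3(9) by auto
  moreover have "walk F (P1 @ Q @ P3)"
    using Q_props(1,3) P1(1,3) P3(2,4) walk_append_iff[of F P1 "[hd Q]"] walk_append_iff[of F "[last Q]" P3]
    by (simp add: walk_append_iff)
  moreover have "set (P1 @ Q @ P3) \<inter> W = {hd P1, last P3}" using Q_W P1(5,7) P3(6,8) by auto
  moreover have "hd P1 \<noteq> last P3" using ear_hd_neq_last[OF P] P1(5) P3(6) by simp
  ultimately show ?thesis
    using Q_props(2,3) P1(3,12) P3(4,13) by (intro earI) (simp_all add: Int_Un_distrib Int_commute)
qed

lemma ear_splice_one_end:
  assumes P: "ear F W P" and Q: "ear F (W \<union> set P) Q" and Q_ends: "hd Q \<in> W" "last Q \<notin> W"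
  shows "\<exists>R. ear F W R \<and> set Q \<subseteq> set R"
proof -
  obtain P' where P': "ear F W P'" "set P' = set P" "hd Q \<noteq> last P'"
  proof (cases "hd Q = last P")
    case True
    then have "hd Q \<noteq> last (rev P)" using ear_hd_neq_last[OF P] by (simp add: last_rev)
    then show thesis using that[of "rev P"] ear_rev[OF P] by simp
  qed (use P in blast)
  have "last Q \<in> set P'" using Q Q_ends(2) P'(2) unfolding ear_def by blast
  then obtain P1 P2 where "P' = P1 @ last Q # P2" by (meson split_list)
  moreover have "ear F (W \<union> set P') Q" using Q P'(2) by simp
  ultimately have "ear F W (Q @ P2)" using ear_splice_end[OF P'(1) _ Q_ends P'(3)] by blast
  then show ?thesis by auto
qed

lemma ear_splice_no_end:
  assumes P: "ear F W P" and Q: "ear F (W \<union> set P) Q" and Q_ends: "hd Q \<notin> W" "last Q \<notin> W"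
  shows "\<exists>R. ear F W R \<and> set Q \<subseteq> set R"
proof -
  have in_P: "hd Q \<in> set P" "last Q \<in> set P" using Q Q_ends unfolding ear_def by blast+
  have "hd Q \<noteq> last Q" using Q by (rule ear_hd_neq_last)
  obtain P' P1 P2 P3 where P': "ear F W P'" "set P' = set P" "P' = P1 @ hd Q # P2 @ last Q # P3"
  proof -
    obtain A R where AR: "P = A @ hd Q # R" using in_P(1) by (meson split_list)
    show thesis
    proof (cases "last Q \<in> set R")
      case True
      then obtain P2 P3 where "R = P2 @ last Q # P3" by (meson split_list)
      then show thesis using that[of P A P2 P3] P AR by simp
    next
      case False
      then have "last Q \<in> set A" using in_P(2) AR \<open>hd Q \<noteq> last Q\<close> by auto
      then obtain B C where "A = B @ last Q # C" by (meson split_list)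
      then have "rev P = rev R @ hd Q # rev C @ last Q # rev B" using AR by simp
      moreover have "set (rev P) = set P" by simp
      ultimately show thesis using that ear_rev[OF P] by blast
    qed
  qed
  moreover have "ear F (W \<union> set P') Q" using Q P'(2) by simp
  ultimately have "ear F W (P1 @ Q @ P3)" using ear_splice_inner[OF P'(1) _ Q_ends] by blast
  then show ?thesis by auto
qed

lemma ear_splice:
  assumes P: "ear F W P" and Q: "ear F (W \<union> set P) Q"
  shows "\<exists>R. ear F W R \<and> set Q \<subseteq> set R"
proof -
  consider "hd Q \<in> W" "last Q \<in> W" | "hd Q \<in> W" "last Q \<notin> W" | "hd Q \<notin> W" "last Q \<in> W"
    | "hd Q \<notin> W" "last Q \<notin> W" by blast
  then show ?thesis
  proof cases
    case 1
    then have "ear F W Q" using Q unfolding ear_def by blast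
    then show ?thesis by blast
  next
    case 2
    then show ?thesis using ear_splice_one_end[OF P Q] by blast
  next
    case 3
    then have "hd (rev Q) \<in> W" "last (rev Q) \<notin> W"
      using Q unfolding ear_def by (auto simp: hd_rev last_rev)
    then show ?thesis using ear_splice_one_end[OF P ear_rev[OF Q]] by auto
  next
    case 4
    then show ?thesis using ear_splice_no_end[OF P Q] by blast
  qed
qed

locale two_node_connected_graph =
  fixes U :: "'a set" and F :: "'a set set"
  assumes two_node_connected: "two_node_connected U F"
    and Union_subset: "\<Union>F \<subseteq> U"
begin

lemma finite_U: "finite U" and card_U: "2 < card U"
  using two_node_connected by (auto simp: two_node_connected_def)

lemma rtrancl_adj: "u \<in> U \<Longrightarrow> v \<in> U \<Longrightarrow> (u, v) \<in> (adj F)\<^sup>*"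
  using two_node_connected Union_subset by (rule two_node_connected_rtrancl_adj)

lemma rtrancl_adj_avoiding:
  assumes "x \<in> U" "u \<in> U - {x}" "v \<in> U - {x}"
  shows "(u, v) \<in> (adj {e \<in> F. x \<notin> e})\<^sup>*"
proof -
  have "\<forall>x\<in>U. \<forall>u\<in>U - {x}. \<forall>v\<in>U - {x}. (u, v) \<in> (adj {e \<in> F. x \<notin> e})\<^sup>*"
    using two_node_connected by (simp add: two_node_connected_iff[OF Union_subset])
  then show ?thesis using assms by blast
qed

lemma path_avoiding:
  assumes "x \<in> U" "u \<in> U - {x}" "v \<in> U - {x}"
  obtains p where "walk F p" "distinct p" "p \<noteq> []" "hd p = u" "last p = v" "set p \<subseteq> U - {x}"
proof -
  obtain p where p: "walk {e \<in> F. x \<notin> e} p" "distinct p" "p \<noteq> []" "hd p = u" "last p = v"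
    using rtrancl_adj_imp_path[OF rtrancl_adj_avoiding[OF assms]] by blast
  have "\<Union>{e \<in> F. x \<notin> e} \<subseteq> U - {x}" using Union_subset by blast
  then have "set p \<subseteq> U - {x}" using walk_set_subset[OF p(1)] p(4) assms(2) by blast
  moreover have "walk F p" using p(1) walk_mono by blast
  ultimately show thesis using that p by blast
qed

lemma exists_ear_leaving:
  assumes W: "W \<subseteq> U" "a \<in> W" "b \<in> W" "a \<noteq> b" and y: "y \<in> U" "y \<notin> W"
  shows "\<exists>e. ear F W e \<and> \<not> set e \<subseteq> W"
proof -
  have "a \<in> U" using W(1,2) by blast
  then have "(a, y) \<in> (adj F)\<^sup>*" using y(1) by (rule rtrancl_adj)
  then obtain w v where wv: "w \<in> W" "v \<notin> W" "{w, v} \<in> F"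
    using rtrancl_adj_crossing[OF _ W(2) y(2)] by blast
  have "v \<in> U" "w \<in> U" using wv Union_subset W(1) by blast+
  obtain w' where w': "w' \<in> W" "w' \<noteq> w" using W(2-4) by blast
  have "v \<in> U - {w}" "w' \<in> U - {w}" using \<open>v \<in> U\<close> wv(1,2) w' W(1) by auto
  then obtain q where q: "walk F q" "distinct q" "q \<noteq> []" "hd q = v" "last q = w'" "set q \<subseteq> U - {w}"
    by (rule path_avoiding[OF \<open>w \<in> U\<close>])
  have "last q \<in> set q" using q(3) by simp
  then have "\<exists>z\<in>set q. z \<in> W" using q(5) w'(1) by auto
  then obtain q1 z q2 where q_split: "q = q1 @ z # q2" "z \<in> W" "\<forall>u\<in>set q1. u \<notin> W"
    using split_list_first_prop[of q "\<lambda>z. z \<in> W"] by blast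
  have "q1 \<noteq> []" using q_split q(4) wv(2) by (cases q1) auto
  then obtain q1' where q1': "q1 = v # q1'" using q(4) q_split(1) by (cases q1) auto
  let ?e = "w # q1 @ [z]"
  have "walk F (q1 @ [z])" using q(1) walk_infix[of F "[]" "q1 @ [z]" q2] q_split(1) by simp
  then have "walk F ?e" using wv(3) q1' by simp
  moreover have "distinct ?e" using q(2,6) q_split(1) by auto
  moreover have "w \<noteq> z" using q(6) q_split(1) by auto
  moreover have "set ?e \<inter> W = {w, z}" using wv(1) q_split(2,3) by auto
  ultimately have "ear F W ?e" by (intro earI) simp_all
  moreover have "\<not> set ?e \<subseteq> W" using wv(2) q1' by simp
  ultimately show ?thesis by blast
qed

lemma ear_through:
  assumes "W \<subseteq> U" "a \<in> W" "b \<in> W" "a \<noteq> b" "t \<in> U" "t \<notin> W"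
  shows "\<exists>R. ear F W R \<and> t \<in> set R"
  using assms
proof (induction "card (U - W)" arbitrary: W rule: less_induct)
  case less
  obtain e where e: "ear F W e" "\<not> set e \<subseteq> W" using exists_ear_leaving less.prems by blast
  show ?case
  proof (cases "t \<in> set e")
    case True
    then show ?thesis using e by blast
  next
    case False
    have "walk F e" "hd e \<in> W" using e(1) unfolding ear_def by auto
    then have "set e \<subseteq> U" using walk_set_subset Union_subset less.prems(1) by blast
    then have "U - (W \<union> set e) \<subset> U - W" using e(2) by blast
    then have "card (U - (W \<union> set e)) < card (U - W)" using finite_U by (meson finite_Diff psubset_card_mono)
    then obtain Q where "ear F (W \<union> set e) Q" "t \<in> set Q"
      using less.hyps[of "W \<union> set e"] less.prems False \<open>set e \<subseteq> U\<close> by blast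
    then show ?thesis using ear_splice[OF e(1)] by blast
  qed
qed

lemma cycle_through:
  assumes "t \<in> U"
  shows "\<exists>c. is_cycle F c \<and> t \<in> set c"
proof -
  obtain u where "u \<in> U" "u \<noteq> t" "u \<noteq> t" by (rule obtain_third_elem[OF finite_U card_U])
  then have "(t, u) \<in> (adj F)\<^sup>*" using assms by (intro rtrancl_adj)
  then obtain v where v: "{t, v} \<in> F" "v \<noteq> t"
    using rtrancl_adj_crossing[of t u F "{t}"] \<open>u \<noteq> t\<close> by auto
  have "v \<in> U" using v(1) Union_subset by blast
  obtain z where z: "z \<in> U" "z \<noteq> t" "z \<noteq> v" by (rule obtain_third_elem[OF finite_U card_U])
  (* an ear of {t, v} through a third vertex, closed by the edge {t, v} *)
  have "\<exists>R. ear F {t, v} R \<and> z \<in> set R"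
    by (rule ear_through) (use assms \<open>v \<in> U\<close> v(2) z in auto)
  then obtain R where R: "ear F {t, v} R" "z \<in> set R" by blast
  have R_props: "walk F R" "distinct R" "set R \<inter> {t, v} = {hd R, last R}" "hd R \<noteq> last R"
    using R(1) ear_hd_neq_last unfolding ear_def by auto
  have "hd R \<in> {t, v}" "last R \<in> {t, v}" using R_props(3) by blast+
  then have ends: "{last R, hd R} = {t, v}" using R_props(4) by auto
  have "card {hd R, last R, z} = 3" using R_props(4) z(2,3) \<open>hd R \<in> {t, v}\<close> \<open>last R \<in> {t, v}\<close> by auto
  moreover have "card {hd R, last R, z} \<le> card (set R)" using R_props(3) R(2) by (intro card_mono) auto
  ultimately have "3 \<le> length R" using distinct_card[OF R_props(2)] by simp
  moreover have "walk F (R @ [hd R])" using R_props(1) ends v(1) by (simp add: walk_append_iff)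
  ultimately have "is_cycle F R" using R_props(2) by (simp add: is_cycle_iff_walk)
  moreover have "t \<in> set R" using R_props(3) ends by blast
  ultimately show ?thesis by blast
qed

end

section \<open>Ear decompositions through the terminals\<close>

definition ear_span :: "'a list list \<Rightarrow> nat \<Rightarrow> 'a set" where
  "ear_span L j = (\<Union>p\<in>set (take j L). set p)"

lemma ear_span_0 [simp]: "ear_span L 0 = {}"
  by (simp add: ear_span_def)

lemma ear_span_Suc: "j < length L \<Longrightarrow> ear_span L (Suc j) = ear_span L j \<union> set (L ! j)"
  by (auto simp: ear_span_def take_Suc_conv_app_nth)

lemma mono_ear_span: "mono (ear_span L)"
proof (rule monoI)
  fix i j :: nat
  assume "i \<le> j"
  then show "ear_span L i \<le> ear_span L j"
    unfolding ear_span_def using set_take_subset_set_take[of i j L] by blast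
qed

lemma ear_span_append: "j \<le> length L \<Longrightarrow> ear_span (L @ M) j = ear_span L j"
  by (simp add: ear_span_def)

(* Piece j is (c # es) ! j: the cycle is piece 0 and the ear es ! i is piece i + 1;
   ear_span L j covers the pieces 0, ..., j - 1. *)
definition terminal_ear_decomposition ::
  "'a set set \<Rightarrow> 'a set \<Rightarrow> 'a list \<Rightarrow> 'a list list \<Rightarrow> bool" where
  "terminal_ear_decomposition F T c es \<longleftrightarrow> is_cycle F c \<and>
     (\<forall>i<length es. ear F (ear_span (c # es) (Suc i)) (es ! i)) \<and>
     (\<forall>j<Suc (length es). \<exists>t\<in>T. t \<in> set ((c # es) ! j) \<and> t \<notin> ear_span (c # es) j)"

lemma terminal_ear_decomposition_new_terminal:
  assumes "terminal_ear_decomposition F T c es" "j < Suc (length es)"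
  shows "\<exists>t\<in>T. t \<in> ear_span (c # es) (Suc j) - ear_span (c # es) j"
proof -
  obtain t where "t \<in> T" "t \<in> set ((c # es) ! j)" "t \<notin> ear_span (c # es) j"
    using assms unfolding terminal_ear_decomposition_def by blast
  then show ?thesis using ear_span_Suc[of j "c # es"] assms(2) by auto
qed

lemma terminal_ear_decomposition_snoc:
  assumes D: "terminal_ear_decomposition F T c es"
    and R: "ear F (ear_span (c # es) (Suc (length es))) R"
    and t: "t \<in> T" "t \<in> set R" "t \<notin> ear_span (c # es) (Suc (length es))"
  shows "terminal_ear_decomposition F T c (es @ [R])"
proof -
  let ?n = "Suc (length es)"
  have span: "ear_span (c # es @ [R]) j = ear_span (c # es) j" if "j \<le> ?n" for j
    using ear_span_append[of j "c # es" "[R]"] that by simp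
  have nth: "(c # es @ [R]) ! j = (c # es) ! j" if "j < ?n" for j
    using that nth_append[of "c # es" "[R]" j] by simp
  have ears: "ear F (ear_span (c # es @ [R]) (Suc i)) ((es @ [R]) ! i)" if "i < ?n" for i
  proof (cases "i < length es")
    case True
    then show ?thesis using D span[of "Suc i"] unfolding terminal_ear_decomposition_def
      by (simp add: nth_append)
  next
    case False
    then have "i = length es" using that by simp
    then show ?thesis using R span[of ?n] by simp
  qed
  have new: "\<exists>t\<in>T. t \<in> set ((c # es @ [R]) ! j) \<and> t \<notin> ear_span (c # es @ [R]) j"
    if "j < Suc ?n" for j
  proof (cases "j < ?n")
    case True
    then show ?thesis using D span[of j] nth[of j] unfolding terminal_ear_decomposition_def by simp
  next
    case False
    then have "j = ?n" using that by simp
    then show ?thesis using t span[of ?n] nth_append_length[of "c # es" R] by auto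
  qed
  show ?thesis using D ears new unfolding terminal_ear_decomposition_def by simp
qed

lemma ear_span_subset_Union:
  assumes "terminal_ear_decomposition F T c es"
  shows "ear_span (c # es) j \<subseteq> \<Union>F"
proof -
  have "set c \<subseteq> \<Union>F"
    using assms walk_set_subset_Union[of F "c @ [hd c]"]
    unfolding terminal_ear_decomposition_def is_cycle_iff_walk by auto
  moreover have "set p \<subseteq> \<Union>F" if p: "p \<in> set es" for p
  proof -
    obtain i where "i < length es" "es ! i = p" using p by (meson in_set_conv_nth)
    then have "ear F (ear_span (c # es) (Suc i)) p"
      using assms unfolding terminal_ear_decomposition_def by blast
    then show ?thesis using walk_set_subset_Union unfolding ear_def by blast
  qed
  ultimately have "\<forall>p\<in>set (c # es). set p \<subseteq> \<Union>F" by simp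
  then show ?thesis unfolding ear_span_def by (blast dest: in_set_takeD)
qed

lemma terminal_ear_decomposition_ends:
  assumes "terminal_ear_decomposition F T c es" "i < length es"
  shows "hd (es ! i) \<in> ear_span (c # es) (Suc i)" "last (es ! i) \<in> ear_span (c # es) (Suc i)"
    "hd (es ! i) \<noteq> last (es ! i)"
proof -
  have "ear F (ear_span (c # es) (Suc i)) (es ! i)"
    using assms unfolding terminal_ear_decomposition_def by blast
  then show "hd (es ! i) \<in> ear_span (c # es) (Suc i)" "last (es ! i) \<in> ear_span (c # es) (Suc i)"
    "hd (es ! i) \<noteq> last (es ! i)"
    using ear_hd_neq_last unfolding ear_def by auto
qed

lemma ends_subset_ear_span:
  assumes "terminal_ear_decomposition F T c es"
  shows "hd ` set es \<union> last ` set es \<subseteq> ear_span (c # es) (Suc (length es))"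
proof
  fix v assume "v \<in> hd ` set es \<union> last ` set es"
  then obtain i where i: "i < length es" "v = hd (es ! i) \<or> v = last (es ! i)"
    by (auto simp: in_set_conv_nth)
  have "ear_span (c # es) (Suc i) \<subseteq> ear_span (c # es) (Suc (length es))"
    using i(1) monoD[OF mono_ear_span[of "c # es"]] by simp
  then show "v \<in> ear_span (c # es) (Suc (length es))"
    using terminal_ear_decomposition_ends[OF assms i(1)] i(2) by blast
qed

lemma card_terminals_ear_span:
  assumes D: "terminal_ear_decomposition F T c es" and T: "finite T" and j: "j \<le> Suc (length es)"
  shows "j \<le> card (T \<inter> ear_span (c # es) j)"
  using j
proof (induction j)
  case (Suc j)
  then have "j < Suc (length es)" by simp
  then obtain t where "t \<in> T" "t \<in> ear_span (c # es) (Suc j) - ear_span (c # es) j"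
    using terminal_ear_decomposition_new_terminal[OF D] by blast
  then have "T \<inter> ear_span (c # es) j \<subset> T \<inter> ear_span (c # es) (Suc j)"
    using monoD[OF mono_ear_span, of j "Suc j" "c # es"] by auto
  then have "card (T \<inter> ear_span (c # es) j) < card (T \<inter> ear_span (c # es) (Suc j))"
    using T by (meson finite_Int psubset_card_mono)
  then show ?case using Suc by simp
qed simp

corollary length_terminal_ear_decomposition:
  assumes "terminal_ear_decomposition F T c es" "finite T"
  shows "length es < card T"
proof -
  have "Suc (length es) \<le> card (T \<inter> ear_span (c # es) (Suc (length es)))"
    using card_terminals_ear_span[OF assms] by simp
  also have "\<dots> \<le> card T" using assms(2) by (simp add: card_mono)
  finally show ?thesis by simp
qed

context two_node_connected_graph
begin

lemma terminal_ear_decomposition_complete: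
  assumes D: "terminal_ear_decomposition F T c es" and T: "T \<subseteq> U" "finite T"
  shows "\<exists>es'. terminal_ear_decomposition F T c es' \<and> T \<subseteq> ear_span (c # es') (Suc (length es'))"
  using D
proof (induction "card (T - ear_span (c # es) (Suc (length es)))" arbitrary: es rule: less_induct)
  case less
  let ?W = "ear_span (c # es) (Suc (length es))"
  show ?case
  proof (cases "T \<subseteq> ?W")
    case True
    then show ?thesis using less.prems by blast
  next
    case False
    then obtain t where t: "t \<in> T" "t \<notin> ?W" by blast
    have "?W \<subseteq> U" using ear_span_subset_Union[OF less.prems] Union_subset by blast
    have c: "distinct c" "3 \<le> length c"
      using less.prems unfolding terminal_ear_decomposition_def is_cycle_def by auto
    then have "c ! 0 \<noteq> c ! 1" by (subst nth_eq_iff_index_eq) auto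
    have len: "0 < length c" "1 < length c" using c(2) by auto
    have "set c \<subseteq> ?W"
      using ear_span_Suc[of 0 "c # es"] monoD[OF mono_ear_span, of 1 "Suc (length es)" "c # es"] by simp
    then have "c ! 0 \<in> ?W" "c ! 1 \<in> ?W" using nth_mem[OF len(1)] nth_mem[OF len(2)] by blast+
    then obtain R where R: "ear F ?W R" "t \<in> set R"
      using ear_through[OF \<open>?W \<subseteq> U\<close> _ _ \<open>c ! 0 \<noteq> c ! 1\<close> _ t(2)] t(1) T(1) by blast
    have D': "terminal_ear_decomposition F T c (es @ [R])"
      using terminal_ear_decomposition_snoc[OF less.prems R(1) t(1) R(2) t(2)] .
    have "ear_span (c # es @ [R]) (Suc (length (es @ [R]))) = ?W \<union> set R"
      using ear_span_Suc[of "Suc (length es)" "c # es @ [R]"] ear_span_append[of _ "c # es" "[R]"]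
      by (simp add: nth_append)
    then have "T - ear_span (c # es @ [R]) (Suc (length (es @ [R]))) \<subset> T - ?W" using t R(2) by auto
    then show ?thesis using less.hyps[OF _ D'] T(2) by (meson finite_Diff psubset_card_mono)
  qed
qed

lemma exists_terminal_ear_decomposition:
  assumes "T \<subseteq> U" "finite T" "T \<noteq> {}"
  shows "\<exists>c es. terminal_ear_decomposition F T c es \<and> T \<subseteq> ear_span (c # es) (Suc (length es))"
proof -
  obtain t where "t \<in> T" using assms(3) by blast
  then obtain c where "is_cycle F c" "t \<in> set c" using cycle_through assms(1) by blast
  then have "terminal_ear_decomposition F T c []"
    using \<open>t \<in> T\<close> unfolding terminal_ear_decomposition_def by (auto simp: ear_span_def)
  then show ?thesis using terminal_ear_decomposition_complete assms(1,2) by blast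
qed

end

lemma card_terminal_ear_decomposition_edges:
  assumes D: "terminal_ear_decomposition F T c es" and F: "finite F"
  shows "card (cycle_edges c) + (\<Sum>i<length es. card (path_edges (es ! i))) \<le> card F"
proof -
  let ?W = "ear_span (c # es)"
  define A where "A m = cycle_edges c \<union> (\<Union>i<m. path_edges (es ! i))" for m
  have "card (A m) = card (cycle_edges c) + (\<Sum>i<m. card (path_edges (es ! i)))
      \<and> \<Union>(A m) \<subseteq> ?W (Suc m) \<and> A m \<subseteq> F" if "m \<le> length es" for m
    using that
  proof (induction m)
    case 0
    have "is_cycle F c" using D unfolding terminal_ear_decomposition_def by blast
    then have "c \<noteq> []" "cycle_edges c \<subseteq> F" unfolding is_cycle_def cycle_edges_def by auto
    moreover have "?W (Suc 0) = set c" by (simp add: ear_span_def)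
    ultimately show ?case by (simp add: A_def Union_cycle_edges)
  next
    case (Suc m)
    then have m: "m < length es" by simp
    have IH: "card (A m) = card (cycle_edges c) + (\<Sum>i<m. card (path_edges (es ! i)))"
      "\<Union>(A m) \<subseteq> ?W (Suc m)" "A m \<subseteq> F"
      using Suc.IH Suc.prems by auto
    have ear: "ear F (?W (Suc m)) (es ! m)" using D m unfolding terminal_ear_decomposition_def by blast
    have "\<exists>t\<in>T. t \<in> ?W (Suc (Suc m)) - ?W (Suc m)"
      using terminal_ear_decomposition_new_terminal[OF D] m by simp
    then have "\<not> set (es ! m) \<subseteq> ?W (Suc m)" using ear_span_Suc[of "Suc m" "c # es"] m by auto
    then have outside: "\<not> e \<subseteq> ?W (Suc m)" if "e \<in> path_edges (es ! m)" for e
      using ear_edge_not_inside[OF ear _ that] by blast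
    have A_Suc: "A (Suc m) = A m \<union> path_edges (es ! m)" by (auto simp: A_def lessThan_Suc)
    have "A m \<inter> path_edges (es ! m) = {}" using IH(2) outside by blast
    moreover have "finite (A m)" by (simp add: A_def finite_cycle_edges finite_path_edges)
    ultimately have "card (A (Suc m)) = card (A m) + card (path_edges (es ! m))"
      unfolding A_Suc by (simp add: card_Un_disjoint finite_path_edges)
    moreover have "\<Union>(A (Suc m)) \<subseteq> ?W (Suc (Suc m))"
    proof -
      have "\<Union>(path_edges (es ! m)) \<subseteq> set (es ! m)" by (auto simp: path_edges_def)
      moreover have "?W (Suc (Suc m)) = ?W (Suc m) \<union> set (es ! m)"
        using ear_span_Suc[of "Suc m" "c # es"] m by simp
      ultimately show ?thesis using IH(2) A_Suc by blast
    qed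
    moreover have "path_edges (es ! m) \<subseteq> F"
      using ear unfolding ear_def walk_iff_path_edges_subset by blast
    ultimately show ?case using IH(1,3) A_Suc by simp
  qed
  then have "card (cycle_edges c) + (\<Sum>i<length es. card (path_edges (es ! i))) = card (A (length es))"
    "A (length es) \<subseteq> F" by auto
  then show ?thesis using F by (simp add: card_mono)
qed

section \<open>Calls of CYC and PATH\<close>

lemma cyc_spec_Some:
  "cyc_spec Eg CYC \<Longrightarrow> CYC X = Some C \<Longrightarrow> \<exists>vs. is_cycle Eg vs \<and> X \<subseteq> set vs \<and> C = cycle_edges vs"
  unfolding cyc_spec_def by blast

lemma cyc_spec_le:
  assumes "cyc_spec Eg CYC" "is_cycle Eg vs" "X \<subseteq> set vs"
  shows "\<exists>C. CYC X = Some C \<and> card C \<le> card (cycle_edges vs)"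
proof -
  have "(CYC X = None \<longleftrightarrow> \<not> (\<exists>vs. is_cycle Eg vs \<and> X \<subseteq> set vs)) \<and>
     (\<forall>C. CYC X = Some C \<longrightarrow> (\<exists>vs. is_cycle Eg vs \<and> X \<subseteq> set vs \<and> C = cycle_edges vs \<and>
        (\<forall>ws. is_cycle Eg ws \<and> X \<subseteq> set ws \<longrightarrow> card C \<le> card (cycle_edges ws))))"
    using assms(1) unfolding cyc_spec_def by (rule spec)
  moreover obtain C where "CYC X = Some C" using calculation assms(2,3) by (cases "CYC X") auto
  ultimately show ?thesis using assms(2,3) by blast
qed

lemma path_spec_Some:
  "path_spec Eg PATH \<Longrightarrow> PATH X s t = Some P \<Longrightarrow> \<exists>vs. is_path Eg vs s t \<and> X \<subseteq> set vs \<and> P = path_edges vs"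
  unfolding path_spec_def by blast

lemma path_spec_le:
  assumes "path_spec Eg PATH" "is_path Eg vs s t" "X \<subseteq> set vs"
  shows "\<exists>P. PATH X s t = Some P \<and> card P \<le> card (path_edges vs)"
proof -
  have "(PATH X s t = None \<longleftrightarrow> \<not> (\<exists>vs. is_path Eg vs s t \<and> X \<subseteq> set vs)) \<and>
     (\<forall>P. PATH X s t = Some P \<longrightarrow> (\<exists>vs. is_path Eg vs s t \<and> X \<subseteq> set vs \<and> P = path_edges vs \<and>
        (\<forall>ws. is_path Eg ws s t \<and> X \<subseteq> set ws \<longrightarrow> card P \<le> card (path_edges ws))))"
    using assms(1) unfolding path_spec_def by blast
  moreover obtain P where "PATH X s t = Some P" using calculation assms(2,3) by (cases "PATH X s t") auto
  ultimately show ?thesis using assms(2,3) by blast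
qed

lemma candidate_eq_Some_iff:
  "candidate CYC PATH (S, Ts, ps) = Some H \<longleftrightarrow>
     (\<exists>C. CYC (Ts ! 0) = Some C \<and> (\<forall>i<length ps. PATH (Ts ! (i + 1)) (fst (ps ! i)) (snd (ps ! i)) \<noteq> None) \<and>
        H = C \<union> (\<Union>i<length ps. the (PATH (Ts ! (i + 1)) (fst (ps ! i)) (snd (ps ! i)))))"
proof -
  have "\<Union>{f i |i. i < n} = (\<Union>i<n. f i)" for f :: "nat \<Rightarrow> 'b set" and n by blast
  then show ?thesis by (auto simp: candidate_def split: option.splits)
qed

lemma cyc_spec_Some_two_node_connected:
  assumes "cyc_spec Eg CYC" "CYC X = Some C"
  shows "two_node_connected (\<Union>C) C" "X \<subseteq> \<Union>C" "C \<subseteq> Eg"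
proof -
  obtain vs where vs: "is_cycle Eg vs" "X \<subseteq> set vs" "C = cycle_edges vs"
    using cyc_spec_Some[OF assms] by blast
  then have "distinct vs" "3 \<le> length vs" unfolding is_cycle_def by auto
  then have "vs \<noteq> []" by auto
  then have "\<Union>C = set vs" using vs(3) Union_cycle_edges by simp
  then show "two_node_connected (\<Union>C) C" "X \<subseteq> \<Union>C"
    using vs(2,3) two_node_connected_cycle[OF \<open>distinct vs\<close> \<open>3 \<le> length vs\<close>] by simp_all
  show "C \<subseteq> Eg" using vs(1,3) unfolding is_cycle_def cycle_edges_def by blast
qed

lemma path_spec_Some_two_node_connected:
  assumes "path_spec Eg PATH" "PATH X s t = Some P"
    and G: "two_node_connected (\<Union>G) G" "s \<noteq> t" "s \<in> \<Union>G" "t \<in> \<Union>G"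
  shows "two_node_connected (\<Union>(G \<union> P)) (G \<union> P)" "X \<subseteq> \<Union>(G \<union> P)" "P \<subseteq> Eg"
proof -
  obtain ws where ws: "is_path Eg ws s t" "X \<subseteq> set ws" "P = path_edges ws"
    using path_spec_Some[OF assms(1,2)] by blast
  then have ws_props: "distinct ws" "ws \<noteq> []" "hd ws = s" "last ws = t" "walk Eg ws"
    unfolding is_path_iff_walk by auto
  then have "2 \<le> length ws" using G(2) by (cases ws; cases "tl ws") auto
  then have "\<Union>P = set ws" using ws(3) Union_path_edges by simp
  then show "two_node_connected (\<Union>(G \<union> P)) (G \<union> P)" "X \<subseteq> \<Union>(G \<union> P)"
    using two_node_connected_add_path[OF G(1) ws_props(1,2)] ws(2,3) ws_props(3,4) G(2-4) by auto
  show "P \<subseteq> Eg" using ws(3) ws_props(5) by (simp add: walk_iff_path_edges_subset)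
qed

lemma candidate_sound:
  assumes cyc: "cyc_spec Eg CYC" and path: "path_spec Eg PATH"
    and ch: "ch \<in> choices V T" and H: "candidate CYC PATH ch = Some H"
  shows "two_node_connected (\<Union>H) H \<and> T \<subseteq> \<Union>H \<and> H \<subseteq> Eg"
proof -
  obtain S Ts ps where ch_eq: "ch = (S, Ts, ps)" by (cases ch)
  let ?n = "length ps"
  let ?P = "\<lambda>i. the (PATH (Ts ! (i + 1)) (fst (ps ! i)) (snd (ps ! i)))"
  have len: "length Ts = Suc ?n" and Union_Ts: "\<Union>(set Ts) = T \<union> S"
    and ends: "\<And>i. i < ?n \<Longrightarrow> fst (ps ! i) \<noteq> snd (ps ! i) \<and>
      fst (ps ! i) \<in> \<Union>(set (take (i + 1) Ts)) \<and> snd (ps ! i) \<in> \<Union>(set (take (i + 1) Ts))"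
    using ch unfolding ch_eq choices_def by auto
  obtain C where C: "CYC (Ts ! 0) = Some C"
    "\<And>i. i < ?n \<Longrightarrow> PATH (Ts ! (i + 1)) (fst (ps ! i)) (snd (ps ! i)) = Some (?P i)"
    and H_eq: "H = C \<union> (\<Union>i<?n. ?P i)"
    using H unfolding ch_eq by (auto simp: candidate_eq_Some_iff)
  define G where "G m = C \<union> (\<Union>i<m. ?P i)" for m
  have "two_node_connected (\<Union>(G m)) (G m) \<and> \<Union>(set (take (Suc m) Ts)) \<subseteq> \<Union>(G m) \<and> G m \<subseteq> Eg"
    if "m \<le> ?n" for m
    using that
  proof (induction m)
    case 0
    show ?case using cyc_spec_Some_two_node_connected[OF cyc C(1)] len
      by (simp add: G_def take_Suc_conv_app_nth)
  next
    case (Suc m)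
    then have m: "m < ?n" and IH: "two_node_connected (\<Union>(G m)) (G m)"
      "\<Union>(set (take (Suc m) Ts)) \<subseteq> \<Union>(G m)" "G m \<subseteq> Eg" by auto
    have "fst (ps ! m) \<noteq> snd (ps ! m)" "fst (ps ! m) \<in> \<Union>(G m)" "snd (ps ! m) \<in> \<Union>(G m)"
      using ends[OF m] IH(2) by auto
    note extended = path_spec_Some_two_node_connected[OF path C(2)[OF m] IH(1) this]
    have "G (Suc m) = G m \<union> ?P m" by (auto simp: G_def lessThan_Suc)
    moreover have "take (Suc (Suc m)) Ts = take (Suc m) Ts @ [Ts ! Suc m]"
      using len m by (simp add: take_Suc_conv_app_nth)
    ultimately show ?case using extended IH(2,3) by auto
  qed
  then have "two_node_connected (\<Union>(G ?n)) (G ?n) \<and> \<Union>(set (take (Suc ?n) Ts)) \<subseteq> \<Union>(G ?n) \<and> G ?n \<subseteq> Eg"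
    by simp
  moreover have "G ?n = H" by (simp add: G_def H_eq)
  moreover have "take (Suc ?n) Ts = Ts" using len by simp
  ultimately show ?thesis using Union_Ts by auto
qed

section \<open>The choice given by a decomposition\<close>

definition layers :: "(nat \<Rightarrow> 'a set) \<Rightarrow> nat \<Rightarrow> 'a set list" where
  "layers A n = map (\<lambda>j. A (Suc j) - A j) [0..<n]"

lemma length_layers [simp]: "length (layers A n) = n"
  by (simp add: layers_def)

lemma nth_layers: "j < n \<Longrightarrow> layers A n ! j = A (Suc j) - A j"
  by (simp add: layers_def)

lemma take_layers: "k \<le> n \<Longrightarrow> take k (layers A n) = layers A k"
  by (simp add: layers_def take_map)

lemma Union_set_layers:
  assumes "mono A" "A 0 = {}"
  shows "\<Union>(set (layers A k)) = A k"
proof (induction k)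
  case (Suc k)
  have "A k \<subseteq> A (Suc k)" using assms(1) by (simp add: monoD)
  then show ?case using Suc by (auto simp: layers_def)
qed (simp add: layers_def assms(2))

lemma layers_disjoint:
  assumes "mono A" "i < n" "j < n" "i \<noteq> j"
  shows "layers A n ! i \<inter> layers A n ! j = {}"
proof -
  have disj: "(A (Suc i) - A i) \<inter> (A (Suc j) - A j) = {}" if "i < j" for i j
    using monoD[OF assms(1), of "Suc i" j] that by auto
  show ?thesis
  proof (cases "i < j")
    case True
    then show ?thesis using disj[of i j] assms(2,3) by (simp add: nth_layers)
  next
    case False
    then have "j < i" using assms(4) by simp
    then show ?thesis using disj[of j i] assms(2,3) by (auto simp: nth_layers)
  qed
qed

lemma card_ends_le: "card (hd ` set es \<union> last ` set es) \<le> 2 * length es"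
proof -
  have "card (hd ` set es \<union> last ` set es) \<le> card (hd ` set es) + card (last ` set es)"
    by (rule card_Un_le)
  also have "\<dots> \<le> length es + length es"
    using card_image_le[of "set es" hd] card_image_le[of "set es" last] card_length[of es] by simp
  finally show ?thesis by simp
qed

(* S consists of the ends of the ears; part j of the partition consists of the elements of
   T \<union> S first covered by piece j; pair i consists of the ends of the ear es ! i. *)
definition decomposition_choice ::
  "'a set \<Rightarrow> 'a list \<Rightarrow> 'a list list \<Rightarrow> 'a set \<times> 'a set list \<times> ('a \<times> 'a) list" where
  "decomposition_choice T c es =
     (let S = hd ` set es \<union> last ` set es
      in (S, layers (\<lambda>j. (T \<union> S) \<inter> ear_span (c # es) j) (Suc (length es)),
          map (\<lambda>p. (hd p, last p)) es))"

lemma decomposition_choice_pieces: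
  assumes "decomposition_choice T c es = (S, Ts, ps)"
  shows "length Ts = Suc (length es)" "ps = map (\<lambda>p. (hd p, last p)) es"
    and "j < Suc (length es) \<Longrightarrow> Ts ! j \<subseteq> set ((c # es) ! j)"
  using assms ear_span_Suc[of j "c # es"] by (auto simp: decomposition_choice_def Let_def nth_layers)

lemma card_first_part_decomposition_choice:
  assumes D: "terminal_ear_decomposition F T c es"
    and cover: "T \<subseteq> ear_span (c # es) (Suc (length es))" and "2 \<le> card T"
    and ch: "decomposition_choice T c es = (S, Ts, ps)"
  shows "2 \<le> card (Ts ! 0)"
proof -
  have first: "Ts ! 0 = (T \<union> S) \<inter> set c" and S: "S = hd ` set es \<union> last ` set es"
    using ch by (auto simp: decomposition_choice_def nth_layers ear_span_def)
  show ?thesis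
  proof (cases "es = []")
    case True
    then have "Ts ! 0 = T" using cover first S by (auto simp: ear_span_def)
    then show ?thesis using assms(3) by simp
  next
    case False
    then have "hd (es ! 0) \<in> set c" "last (es ! 0) \<in> set c" "hd (es ! 0) \<noteq> last (es ! 0)"
      using terminal_ear_decomposition_ends[OF D, of 0] by (simp_all add: ear_span_def)
    moreover have "hd (es ! 0) \<in> S" "last (es ! 0) \<in> S" using False S by simp_all
    ultimately have "{hd (es ! 0), last (es ! 0)} \<subseteq> Ts ! 0" using first by blast
    then have "card {hd (es ! 0), last (es ! 0)} \<le> card (Ts ! 0)" by (rule card_mono[rotated]) (simp add: first)
    then show ?thesis using \<open>hd (es ! 0) \<noteq> last (es ! 0)\<close> by simp
  qed
qed

lemma decomposition_choice_in_choices: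
  assumes D: "terminal_ear_decomposition F T c es"
    and cover: "T \<subseteq> ear_span (c # es) (Suc (length es))"
    and V: "\<Union>F \<subseteq> V" and T: "finite T" "2 \<le> card T"
  shows "decomposition_choice T c es \<in> choices V T"
proof -
  let ?n = "length es" and ?W = "ear_span (c # es)"
  define S where "S = hd ` set es \<union> last ` set es"
  define A where "A = (\<lambda>j. (T \<union> S) \<inter> ?W j)"
  define Ts where "Ts = layers A (Suc ?n)"
  define ps where "ps = map (\<lambda>p. (hd p, last p)) es"
  have choice: "decomposition_choice T c es = (S, Ts, ps)"
    by (simp add: decomposition_choice_def S_def A_def Ts_def ps_def)
  have "mono A" using mono_ear_span[of "c # es"] unfolding A_def mono_def by blast
  then have A: "mono A" "A 0 = {}" by (simp_all add: A_def)
  have ends: "hd (es ! i) \<in> A (Suc i)" "last (es ! i) \<in> A (Suc i)" "hd (es ! i) \<noteq> last (es ! i)"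
    if "i < ?n" for i
    using terminal_ear_decomposition_ends[OF D that] that by (auto simp: A_def S_def)
  have prefix: "\<Union>(set (take (Suc i) Ts)) = A (Suc i)" if "i \<le> ?n" for i
    using that by (simp add: Ts_def take_layers Union_set_layers[OF A])
  have "S \<subseteq> ?W (Suc ?n)" using ends_subset_ear_span[OF D] by (simp add: S_def)
  then have "S \<subseteq> V" using ear_span_subset_Union[OF D] V by blast
  moreover have "card S \<le> 2 * card T"
    using card_ends_le[of es] length_terminal_ear_decomposition[OF D T(1)] unfolding S_def by linarith
  moreover have "length Ts \<le> card T"
    using length_terminal_ear_decomposition[OF D T(1)] by (simp add: Ts_def)
  moreover have "Ts ! j \<noteq> {}" if "j < length Ts" for j
    using terminal_ear_decomposition_new_terminal[OF D, of j] that by (auto simp: Ts_def nth_layers A_def)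
  moreover have "Ts ! i \<inter> Ts ! j = {}" if "i < length Ts" "j < length Ts" "i \<noteq> j" for i j
    using layers_disjoint[OF A(1)] that by (simp add: Ts_def)
  moreover have "\<Union>(set Ts) = T \<union> S"
    using prefix[of ?n] cover \<open>S \<subseteq> ?W (Suc ?n)\<close> by (auto simp: Ts_def A_def)
  moreover have "2 \<le> card (Ts ! 0)"
    using card_first_part_decomposition_choice[OF D cover T(2) choice] .
  moreover have "fst (ps ! i) \<noteq> snd (ps ! i) \<and> fst (ps ! i) \<in> \<Union>(set (take (i + 1) Ts))
      \<and> snd (ps ! i) \<in> \<Union>(set (take (i + 1) Ts))" if "i < length ps" for i
    using that ends[of i] prefix[of i] by (simp add: ps_def)
  ultimately show ?thesis
    unfolding choice choices_def by (simp add: Ts_def ps_def)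
qed

lemma candidate_decomposition_choice:
  assumes D: "terminal_ear_decomposition F T c es" and "F \<subseteq> Eg"
    and cyc: "cyc_spec Eg CYC" and path: "path_spec Eg PATH"
  shows "\<exists>H. candidate CYC PATH (decomposition_choice T c es) = Some H
    \<and> card H \<le> card (cycle_edges c) + (\<Sum>i<length es. card (path_edges (es ! i)))"
proof -
  obtain S Ts ps where ch: "decomposition_choice T c es = (S, Ts, ps)" by (metis prod_cases3)
  note pieces = decomposition_choice_pieces[OF ch]
  have "is_cycle Eg c"
    using D walk_mono \<open>F \<subseteq> Eg\<close> unfolding terminal_ear_decomposition_def is_cycle_iff_walk by blast
  moreover have "Ts ! 0 \<subseteq> set c" using pieces(3)[of 0] by simp
  ultimately obtain C where C: "CYC (Ts ! 0) = Some C" "card C \<le> card (cycle_edges c)"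
    using cyc_spec_le[OF cyc] by blast
  have "\<exists>P. PATH (Ts ! (i + 1)) (fst (ps ! i)) (snd (ps ! i)) = Some P \<and> card P \<le> card (path_edges (es ! i))"
    if i: "i < length es" for i
  proof -
    have "ear F (ear_span (c # es) (Suc i)) (es ! i)"
      using D i unfolding terminal_ear_decomposition_def by blast
    then have "is_path Eg (es ! i) (fst (ps ! i)) (snd (ps ! i))"
      using walk_mono \<open>F \<subseteq> Eg\<close> i pieces(2) unfolding ear_def is_path_iff_walk by auto
    moreover have "Ts ! (i + 1) \<subseteq> set (es ! i)" using pieces(3)[of "Suc i"] i by simp
    ultimately show ?thesis using path_spec_le[OF path] by blast
  qed
  then obtain P where P: "\<And>i. i < length es \<Longrightarrow>
      PATH (Ts ! (i + 1)) (fst (ps ! i)) (snd (ps ! i)) = Some (P i) \<and> card (P i) \<le> card (path_edges (es ! i))"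
    by metis
  have "candidate CYC PATH (S, Ts, ps) = Some (C \<union> (\<Union>i<length es. P i))"
    using C(1) P pieces(2) by (simp add: candidate_eq_Some_iff)
  moreover have "card (\<Union>i<length es. P i) \<le> (\<Sum>i<length es. card (P i))"
    by (rule card_UN_le) simp
  then have "card (C \<union> (\<Union>i<length es. P i)) \<le> card C + (\<Sum>i<length es. card (P i))"
    using card_Un_le[of C "\<Union>i<length es. P i"] by linarith
  moreover have "(\<Sum>i<length es. card (P i)) \<le> (\<Sum>i<length es. card (path_edges (es ! i)))"
    using P by (intro sum_mono) simp
  ultimately show ?thesis using C(2) ch by fastforce
qed

context two_node_connected_graph
begin

lemma finite_F: "finite F"
  using finite_subset[OF Union_subset finite_U] by (rule finite_UnionD)

lemma exists_choice_with_small_candidate: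
  assumes "F \<subseteq> Eg" "U \<subseteq> V" "T \<subseteq> U" "finite T" "2 \<le> card T"
    and cyc: "cyc_spec Eg CYC" and path: "path_spec Eg PATH"
  shows "\<exists>ch\<in>choices V T. \<exists>H. candidate CYC PATH ch = Some H \<and> card H \<le> card F"
proof -
  have "T \<noteq> {}" using assms(5) by auto
  then obtain c es where D: "terminal_ear_decomposition F T c es"
    and cover: "T \<subseteq> ear_span (c # es) (Suc (length es))"
    using exists_terminal_ear_decomposition assms(3,4) by blast
  have "decomposition_choice T c es \<in> choices V T"
    using decomposition_choice_in_choices[OF D cover _ assms(4,5)] Union_subset assms(2) by blast
  moreover obtain H where "candidate CYC PATH (decomposition_choice T c es) = Some H"
    "card H \<le> card (cycle_edges c) + (\<Sum>i<length es. card (path_edges (es ! i)))"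
    using candidate_decomposition_choice[OF D assms(1) cyc path] by blast
  moreover note card_terminal_ear_decomposition_edges[OF D finite_F]
  ultimately show ?thesis by (meson order_trans)
qed

end

section \<open>The output of the algorithm\<close>

lemma fold_alg_step_cases:
  "fold (alg_step CYC PATH) L A = A \<or>
     (\<exists>ch\<in>set L. candidate CYC PATH ch = Some (fold (alg_step CYC PATH) L A))"
proof (induction L arbitrary: A)
  case (Cons ch L)
  then show ?case by (cases "candidate CYC PATH ch") (auto simp: alg_step_def)
qed simp

lemma card_fold_alg_step_le: "card (fold (alg_step CYC PATH) L A) \<le> card A"
proof (induction L arbitrary: A)
  case (Cons ch L)
  have "card (alg_step CYC PATH ch A) \<le> card A" by (auto simp: alg_step_def split: option.splits)
  then show ?case using Cons.IH[of "alg_step CYC PATH ch A"] by simp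
qed simp

lemma fold_alg_step_le_candidate:
  assumes "ch \<in> set L" "candidate CYC PATH ch = Some H"
  shows "card (fold (alg_step CYC PATH) L A) \<le> card H"
  using assms
proof (induction L arbitrary: A)
  case (Cons ch' L)
  show ?case
  proof (cases "ch' = ch")
    case True
    have "card (fold (alg_step CYC PATH) (ch' # L) A) \<le> card (alg_step CYC PATH ch A)"
      using True card_fold_alg_step_le by simp
    also have "\<dots> \<le> card H" using Cons.prems(2) by (simp add: alg_step_def)
    finally show ?thesis .
  next
    case False
    then have "ch \<in> set L" using Cons.prems(1) by simp
    then show ?thesis using Cons.IH[of "alg_step CYC PATH ch' A"] Cons.prems(2) by simp
  qed
qed simp

lemma alg_output_is_candidate:
  assumes "finite Eg"
    and ch: "ch \<in> set order" "candidate CYC PATH ch = Some H" "H \<subseteq> Eg"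
  shows "\<exists>ch'\<in>set order. candidate CYC PATH ch' = Some (alg_output Eg CYC PATH order)"
proof (cases "alg_output Eg CYC PATH order = Eg")
  case True
  then have "card Eg \<le> card H"
    using fold_alg_step_le_candidate[OF ch(1,2), where A = Eg] by (simp add: alg_output_def)
  then have "H = Eg" using card_seteq[OF assms(1) ch(3)] by blast
  then show ?thesis using ch True by auto
next
  case False
  then show ?thesis using fold_alg_step_cases[of CYC PATH order Eg] by (simp add: alg_output_def)
qed

theorem lemma4p3:
  fixes V :: "'a set" and Eg :: "'a set set" and T :: "'a set"
    and CYC :: "'a set \<Rightarrow> 'a set set option"
    and PATH :: "'a set \<Rightarrow> 'a \<Rightarrow> 'a \<Rightarrow> 'a set set option"
    and order :: "('a set \<times> 'a set list \<times> ('a \<times> 'a) list) list"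
    and Vs :: "'a set" and Es :: "'a set set"
  assumes G: "graph V Eg"
    and TV: "T \<subseteq> V" and k3: "card T \<ge> 3"
    and opt_sub: "subgraph Vs Es V Eg" and opt_2nc: "two_node_connected Vs Es" and opt_T: "T \<subseteq> Vs"
    and opt_min: "\<And>U F. subgraph U F V Eg \<Longrightarrow> two_node_connected U F \<Longrightarrow> T \<subseteq> U \<Longrightarrow> card Es \<le> card F"
    and cyc: "cyc_spec Eg CYC" and path: "path_spec Eg PATH"
    and ord: "set order = choices V T"
  shows "two_node_connected (\<Union>(alg_output Eg CYC PATH order)) (alg_output Eg CYC PATH order)
       \<and> T \<subseteq> \<Union>(alg_output Eg CYC PATH order)
       \<and> card (alg_output Eg CYC PATH order) \<le> card Es"
proof -
  have Es: "Es \<subseteq> Eg" "\<Union>Es \<subseteq> Vs" "Vs \<subseteq> V" using opt_sub unfolding subgraph_def by auto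
  have "finite V" "Eg \<subseteq> Pow V" using G unfolding graph_def by auto
  then have "finite Eg" "finite T" using TV by (auto intro: finite_subset)
  interpret two_node_connected_graph Vs Es by (rule two_node_connected_graph.intro[OF opt_2nc Es(2)])
  obtain ch H where ch: "ch \<in> set order" "candidate CYC PATH ch = Some H" and "card H \<le> card Es"
    using exists_choice_with_small_candidate[OF Es(1,3) opt_T \<open>finite T\<close> _ cyc path] k3 ord by auto
  have sound: "two_node_connected (\<Union>H') H' \<and> T \<subseteq> \<Union>H' \<and> H' \<subseteq> Eg"
    if "ch' \<in> set order" "candidate CYC PATH ch' = Some H'" for ch' H'
    using candidate_sound[OF cyc path] that ord by blast
  have "card (alg_output Eg CYC PATH order) \<le> card Es"
    using fold_alg_step_le_candidate[OF ch, where A = Eg] \<open>card H \<le> card Es\<close> by (simp add: alg_output_def)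
  moreover obtain ch' where "ch' \<in> set order" "candidate CYC PATH ch' = Some (alg_output Eg CYC PATH order)"
    using alg_output_is_candidate[OF \<open>finite Eg\<close> ch] sound[OF ch] by blast
  ultimately show ?thesis using sound by blast
qed

end
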